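(* Let $G$ be a group equipped with a $\sigma$-field, acting measurably on a measurable sample space $\Omega_X$ and on a measurable action space $\Omega_A$, and let the parameter space be $\Omega_\Theta=G$, with $G$ acting on it by left multiplication $(g,\theta)\mapsto g\theta$. Let $\{P_X^\theta:\theta\in G\}$ be a family of probability measures on $\Omega_X$ that is group invariant: for all $g,\theta\in G$, the law of $gX$ when $X\sim P_X^\theta$ equals $P_X^{g\theta}$. Let $\gamma:G\times\Omega_A\to[0,\infty]$ be a measurable loss that is invariant, $\gamma(g\theta,ga)=\gamma(\theta,a)$ for all $g,\theta\in G$, $a\in\Omega_A$, and let $\delta:\Omega_X\to\Omega_A$ be a measurable equivariant rule, $\delta(gx)=g\delta(x)$ for all $g\in G$, $x\in\Omega_X$. Let $U$ be a random element of $\Omega_X$ with law $Q=P_X^e$ ($e$ the identity of $G$). Let $\phi:\Omega_X\to\Omega_Y$ be a measurable maximal invariant (i.e. $\phi(gx)=\phi(x)$ for all $g,x$, and $\phi(x)=\phi(u)$ implies $x\in Gu$), and suppose there is a measurable selection $s:\{(x,u):\phi(x)=\phi(u)\}\to G$ with $x=s(x,u)\,u$ for all such $(x,u)$. For $x\in\Omega_X$ define the random element $\Theta^x=s(x,U)$ on the event $\{\phi(U)=\phi(x)\}$; the conditional law of $\Theta^x$ given $\phi(U)=\phi(x)$ is called a fiducial distribution. Let $(Q^y)_y$ be a regular conditional distribution of $U$ given $\phi(U)=y$ with $Q^y$ concentrated on $\phi^{-1}(y)$ for $Q_Y$-a.e. $y$, where $Q_Y$ is the law of $\phi(U)$. Then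 for every $\theta\in G$ the risk satisfies $$\rho(\theta):=\int \gamma(\theta,\delta(x))\,P_X^\theta(dx)=\int\Big[\int\gamma(e,\delta(u))\,Q^y(du)\Big]\,Q_Y(dy),$$ so in particular $\rho(\theta)$ does not depend on $\theta$; and for $Q_Y$-a.e. $y$ and every $x\in\Omega_X$ with $\phi(x)=y$, $$\int\gamma(e,\delta(u))\,Q^y(du)=\int\gamma\big(s(x,u),\delta(x)\big)\,Q^y(du)=\mathbb{E}\big[\gamma(\Theta^x,\delta(x))\,\big|\,\phi(U)=y\big].$$ That is, the risk of any equivariant rule is determined by the fiducial distribution (for any choice of measurable selection $s$).
   Context: A statistical decision problem: loss $\gamma(\theta,a)$ of action $a$ under parameter $\theta$, risk $\rho(\theta)=\mathbb{E}^\theta\gamma(\theta,\delta(X))$ of a rule $\delta$. An orbit of $x$ is $Gx=\{gx:g\in G\}$. The model parameter space $G$ with left multiplication is a principal homogeneous space (free and transitive action) for $G$. *)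

theory Defs
  imports "HOL-Probability.Probability" "HOL-Algebra.Group"
begin

definition meas_action :: "('g, 'b) monoid_scheme \<Rightarrow> 'g measure \<Rightarrow> 'x measure \<Rightarrow> ('g \<Rightarrow> 'x \<Rightarrow> 'x) \<Rightarrow> bool" where
  "meas_action G MG M act \<longleftrightarrow>
     (\<forall>x\<in>space M. act \<one>\<^bsub>G\<^esub> x = x) \<and>
     (\<forall>g\<in>carrier G. \<forall>h\<in>carrier G. \<forall>x\<in>space M. act (g \<otimes>\<^bsub>G\<^esub> h) x = act g (act h x)) \<and>
     (\<forall>g\<in>carrier G. \<forall>x\<in>space M. act g x \<in> space M) \<and>
     (\<lambda>(g, x). act g x) \<in> MG \<Otimes>\<^sub>M M \<rightarrow>\<^sub>M M"

definition maximal_invariant :: "('g, 'b) monoid_scheme \<Rightarrow> 'x measure \<Rightarrow> ('g \<Rightarrow> 'x \<Rightarrow> 'x) \<Rightarrow> ('x \<Rightarrow> 'y) \<Rightarrow> bool" where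
  "maximal_invariant G M act \<phi> \<longleftrightarrow>
     (\<forall>g\<in>carrier G. \<forall>x\<in>space M. \<phi> (act g x) = \<phi> x) \<and>
     (\<forall>x\<in>space M. \<forall>u\<in>space M. \<phi> x = \<phi> u \<longrightarrow> (\<exists>g\<in>carrier G. x = act g u))"

definition regular_cond_distr :: "'x measure \<Rightarrow> 'y measure \<Rightarrow> ('x \<Rightarrow> 'y) \<Rightarrow> ('y \<Rightarrow> 'x measure) \<Rightarrow> bool" where
  "regular_cond_distr Q MY \<phi> Qc \<longleftrightarrow>
     Qc \<in> MY \<rightarrow>\<^sub>M prob_algebra Q \<and>
     (\<forall>A\<in>sets Q. \<forall>B\<in>sets MY.
        emeasure Q (A \<inter> \<phi> -` B \<inter> space Q) = (\<integral>\<^sup>+ y\<in>B. emeasure (Qc y) A \<partial>distr Q MY \<phi>))"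

end

theory Submission
  imports Defs
begin

text \<open>Since \<open>P\<^sub>\<theta>\<close> is the image of \<open>Q\<close> under \<open>u \<mapsto> \<theta>u\<close>, invariance of the
  loss and equivariance of the rule give \<open>\<gamma>(\<theta>, \<delta>(\<theta>u)) = \<gamma>(e, \<delta>(u))\<close>, so the risk at \<open>\<theta>\<close>
  equals the risk at \<open>e\<close>, which disintegrates along the maximal invariant as
  \<open>Q = Q\<^sub>Y \<bind> Q\<^sup>y\<close>. On the fibre \<open>\<phi> = \<phi>(x)\<close> every \<open>u\<close> satisfies \<open>x = s(x,u) u\<close>, and the same
  identity applied with \<open>\<theta> = s(x,u)\<close> turns \<open>\<gamma>(e, \<delta>(u))\<close> into \<open>\<gamma>(s(x,u), \<delta>(x))\<close>.
  The selection already witnesses the orbit relation.\<close>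

lemma measurable_meas_action:
  assumes "meas_action G MG M act" and "g \<in> space MG"
  shows "act g \<in> M \<rightarrow>\<^sub>M M"
proof -
  have "(\<lambda>x. (g, x)) \<in> M \<rightarrow>\<^sub>M MG \<Otimes>\<^sub>M M"
    using assms(2) by (intro measurable_Pair) auto
  from measurable_comp[OF this, of "\<lambda>(g, x). act g x" M] assms(1)
  show ?thesis by (auto simp: meas_action_def comp_def)
qed

lemma sets_regular_cond_distr:
  assumes "regular_cond_distr Q MY \<phi> Qc" and "y \<in> space MY"
  shows "sets (Qc y) = sets Q"
  using assms measurable_space[of Qc MY "prob_algebra Q" y]
  by (auto simp: regular_cond_distr_def space_prob_algebra)

lemma regular_cond_distr_bind:
  assumes rcd: "regular_cond_distr Q MY \<phi> Qc"
    and \<phi>: "\<phi> \<in> Q \<rightarrow>\<^sub>M MY" and ne: "space Q \<noteq> {}"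
  shows "Q = distr Q MY \<phi> \<bind> Qc"
proof (rule measure_eqI)
  have Qc: "Qc \<in> distr Q MY \<phi> \<rightarrow>\<^sub>M subprob_algebra Q"
    using rcd measurable_prob_algebraD by (auto simp: regular_cond_distr_def)
  have ne_Y: "space (distr Q MY \<phi>) \<noteq> {}"
    using ne measurable_space[OF \<phi>] by auto
  show "sets Q = sets (distr Q MY \<phi> \<bind> Qc)"
    using sets_bind_measurable[OF Qc ne_Y] by simp
  fix A assume A: "A \<in> sets Q"
  have "A \<inter> \<phi> -` space MY \<inter> space Q = A"
    using sets.sets_into_space[OF A] measurable_space[OF \<phi>] by auto
  with rcd A have "emeasure Q A = (\<integral>\<^sup>+ y\<in>space MY. emeasure (Qc y) A \<partial>distr Q MY \<phi>)"
    unfolding regular_cond_distr_def by (metis sets.top)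
  also have "\<dots> = (\<integral>\<^sup>+ y. emeasure (Qc y) A \<partial>distr Q MY \<phi>)"
    by (intro nn_integral_cong) (simp add: indicator_def)
  finally show "emeasure Q A = emeasure (distr Q MY \<phi> \<bind> Qc) A"
    using emeasure_bind[OF ne_Y Qc A] by simp
qed

lemma nn_integral_regular_cond_distr:
  assumes rcd: "regular_cond_distr Q MY \<phi> Qc"
    and \<phi>: "\<phi> \<in> Q \<rightarrow>\<^sub>M MY" and ne: "space Q \<noteq> {}"
    and f: "f \<in> borel_measurable Q"
  shows "(\<integral>\<^sup>+ u. f u \<partial>Q) = (\<integral>\<^sup>+ y. (\<integral>\<^sup>+ u. f u \<partial>Qc y) \<partial>distr Q MY \<phi>)"
proof -
  have Qc: "Qc \<in> distr Q MY \<phi> \<rightarrow>\<^sub>M subprob_algebra Q"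
    using rcd measurable_prob_algebraD by (auto simp: regular_cond_distr_def)
  have "(\<integral>\<^sup>+ u. f u \<partial>Q) = (\<integral>\<^sup>+ u. f u \<partial>(distr Q MY \<phi> \<bind> Qc))"
    using regular_cond_distr_bind[OF rcd \<phi> ne] by simp
  also have "\<dots> = (\<integral>\<^sup>+ y. (\<integral>\<^sup>+ u. f u \<partial>Qc y) \<partial>distr Q MY \<phi>)"
    using f Qc by (rule nn_integral_bind)
  finally show ?thesis .
qed

lemma measurable_loss_of_rule:
  assumes "(\<lambda>(\<theta>, a). \<gamma> \<theta> a) \<in> borel_measurable (MG \<Otimes>\<^sub>M MA)"
    and "\<delta> \<in> MX \<rightarrow>\<^sub>M MA" and "\<theta> \<in> space MG"
  shows "(\<lambda>x. \<gamma> \<theta> (\<delta> x)) \<in> borel_measurable MX"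
proof -
  have "(\<lambda>x. (\<theta>, \<delta> x)) \<in> MX \<rightarrow>\<^sub>M MG \<Otimes>\<^sub>M MA"
    using assms(2,3) by (intro measurable_Pair) auto
  from measurable_comp[OF this assms(1)] show ?thesis
    by (simp add: comp_def)
qed

lemma invariant_loss_equivariant_rule:
  assumes "group G"
    and \<gamma>_inv: "\<And>g \<theta> a. g \<in> carrier G \<Longrightarrow> \<theta> \<in> carrier G \<Longrightarrow> a \<in> A \<Longrightarrow>
                  \<gamma> (g \<otimes>\<^bsub>G\<^esub> \<theta>) (actA g a) = \<gamma> \<theta> a"
    and \<delta>_equiv: "\<And>g x. g \<in> carrier G \<Longrightarrow> x \<in> X \<Longrightarrow> \<delta> (actX g x) = actA g (\<delta> x)"
    and \<delta>: "\<delta> \<in> X \<rightarrow> A"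
    and g: "g \<in> carrier G" and u: "u \<in> X"
  shows "\<gamma> g (\<delta> (actX g u)) = \<gamma> \<one>\<^bsub>G\<^esub> (\<delta> u)"
proof -
  interpret group G by fact
  have "\<gamma> (g \<otimes>\<^bsub>G\<^esub> \<one>\<^bsub>G\<^esub>) (actA g (\<delta> u)) = \<gamma> \<one>\<^bsub>G\<^esub> (\<delta> u)"
    using \<gamma>_inv[OF g one_closed funcset_mem[OF \<delta> u]] .
  then show ?thesis
    using \<delta>_equiv[OF g u] g by simp
qed

lemma nn_integral_distr_action:
  assumes act: "meas_action G MG MX actX" and "carrier G = space MG"
    and Q: "sets Q = sets MX" and \<theta>: "\<theta> \<in> carrier G"
    and f: "f \<in> borel_measurable MX"
    and f_inv: "\<And>u. u \<in> space MX \<Longrightarrow> f (actX \<theta> u) = h u"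
  shows "(\<integral>\<^sup>+ x. f x \<partial>distr Q MX (actX \<theta>)) = (\<integral>\<^sup>+ u. h u \<partial>Q)"
proof -
  have "actX \<theta> \<in> Q \<rightarrow>\<^sub>M MX"
    using measurable_meas_action[OF act] \<theta> assms(2) by (simp add: measurable_cong_sets[OF Q refl])
  then have "(\<integral>\<^sup>+ x. f x \<partial>distr Q MX (actX \<theta>)) = (\<integral>\<^sup>+ u. f (actX \<theta> u) \<partial>Q)"
    using f by (intro nn_integral_distr) simp_all
  also have "\<dots> = (\<integral>\<^sup>+ u. h u \<partial>Q)"
    using f_inv sets_eq_imp_space_eq[OF Q] by (intro nn_integral_cong) auto
  finally show ?thesis .
qed

lemma nn_integral_loss_along_selection:
  assumes fibre: "AE u in N. \<phi> u = \<phi> x" and N: "sets N = sets MX"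
    and s_carrier: "\<And>u. u \<in> space MX \<Longrightarrow> \<phi> x = \<phi> u \<Longrightarrow> s (x, u) \<in> carrier G"
    and s_sel: "\<And>u. u \<in> space MX \<Longrightarrow> \<phi> x = \<phi> u \<Longrightarrow> x = actX (s (x, u)) u"
    and translate: "\<And>g u. g \<in> carrier G \<Longrightarrow> u \<in> space MX \<Longrightarrow> \<gamma> g (\<delta> (actX g u)) = \<gamma> \<one>\<^bsub>G\<^esub> (\<delta> u)"
  shows "(\<integral>\<^sup>+ u. \<gamma> \<one>\<^bsub>G\<^esub> (\<delta> u) \<partial>N) = (\<integral>\<^sup>+ u. \<gamma> (s (x, u)) (\<delta> x) \<partial>N)"
proof (rule nn_integral_cong_AE)
  have on_fibre: "\<gamma> \<one>\<^bsub>G\<^esub> (\<delta> u) = \<gamma> (s (x, u)) (\<delta> x)" if "u \<in> space MX" "\<phi> x = \<phi> u" for u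
    using translate[OF s_carrier[OF that] that(1)] s_sel[OF that, symmetric] by simp
  show "AE u in N. \<gamma> \<one>\<^bsub>G\<^esub> (\<delta> u) = \<gamma> (s (x, u)) (\<delta> x)"
    using fibre AE_space by eventually_elim (metis on_fibre sets_eq_imp_space_eq[OF N])
qed

theorem theorem1:
  fixes G :: "'g monoid" and MG :: "'g measure"
    and MX :: "'x measure" and MA :: "'a measure" and MY :: "'y measure"
    and actX :: "'g \<Rightarrow> 'x \<Rightarrow> 'x" and actA :: "'g \<Rightarrow> 'a \<Rightarrow> 'a"
    and P :: "'g \<Rightarrow> 'x measure"
    and \<gamma> :: "'g \<Rightarrow> 'a \<Rightarrow> ennreal" and \<delta> :: "'x \<Rightarrow> 'a"
    and \<phi> :: "'x \<Rightarrow> 'y" and s :: "'x \<times> 'x \<Rightarrow> 'g"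
    and Qc :: "'y \<Rightarrow> 'x measure"
  assumes grp: "group G"
    and carrier_MG: "carrier G = space MG"
    and mult_meas: "(\<lambda>(g, h). g \<otimes>\<^bsub>G\<^esub> h) \<in> MG \<Otimes>\<^sub>M MG \<rightarrow>\<^sub>M MG"
    and actX: "meas_action G MG MX actX"
    and actA: "meas_action G MG MA actA"
    and P_prob: "\<And>\<theta>. \<theta> \<in> carrier G \<Longrightarrow> prob_space (P \<theta>)"
    and P_sets: "\<And>\<theta>. \<theta> \<in> carrier G \<Longrightarrow> sets (P \<theta>) = sets MX"
    and P_inv: "\<And>g \<theta>. g \<in> carrier G \<Longrightarrow> \<theta> \<in> carrier G \<Longrightarrow>
                  distr (P \<theta>) MX (actX g) = P (g \<otimes>\<^bsub>G\<^esub> \<theta>)"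
    and \<gamma>_meas: "(\<lambda>(\<theta>, a). \<gamma> \<theta> a) \<in> borel_measurable (MG \<Otimes>\<^sub>M MA)"
    and \<gamma>_inv: "\<And>g \<theta> a. g \<in> carrier G \<Longrightarrow> \<theta> \<in> carrier G \<Longrightarrow> a \<in> space MA \<Longrightarrow>
                  \<gamma> (g \<otimes>\<^bsub>G\<^esub> \<theta>) (actA g a) = \<gamma> \<theta> a"
    and \<delta>_meas: "\<delta> \<in> MX \<rightarrow>\<^sub>M MA"
    and \<delta>_equiv: "\<And>g x. g \<in> carrier G \<Longrightarrow> x \<in> space MX \<Longrightarrow> \<delta> (actX g x) = actA g (\<delta> x)"
    and \<phi>_meas: "\<phi> \<in> MX \<rightarrow>\<^sub>M MY"
    and \<phi>_maxinv: "maximal_invariant G MX actX \<phi>"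
    and s_meas: "s \<in> restrict_space (MX \<Otimes>\<^sub>M MX) {(x, u). \<phi> x = \<phi> u} \<rightarrow>\<^sub>M MG"
    and s_sel: "\<And>x u. x \<in> space MX \<Longrightarrow> u \<in> space MX \<Longrightarrow> \<phi> x = \<phi> u \<Longrightarrow>
                  x = actX (s (x, u)) u"
    and Qc_rcd: "regular_cond_distr (P \<one>\<^bsub>G\<^esub>) MY \<phi> Qc"
    and Qc_conc: "AE y in distr (P \<one>\<^bsub>G\<^esub>) MY \<phi>. AE u in Qc y. \<phi> u = y"
  shows "(\<forall>\<theta>\<in>carrier G.
            (\<integral>\<^sup>+ x. \<gamma> \<theta> (\<delta> x) \<partial>P \<theta>)
              = (\<integral>\<^sup>+ y. (\<integral>\<^sup>+ u. \<gamma> \<one>\<^bsub>G\<^esub> (\<delta> u) \<partial>Qc y) \<partial>distr (P \<one>\<^bsub>G\<^esub>) MY \<phi>))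
       \<and> (AE y in distr (P \<one>\<^bsub>G\<^esub>) MY \<phi>. \<forall>x\<in>space MX. \<phi> x = y \<longrightarrow>
            (\<integral>\<^sup>+ u. \<gamma> \<one>\<^bsub>G\<^esub> (\<delta> u) \<partial>Qc y) = (\<integral>\<^sup>+ u. \<gamma> (s (x, u)) (\<delta> x) \<partial>Qc y))"
proof -
  interpret group G by (fact grp)
  let ?e = "\<one>\<^bsub>G\<^esub>"
  have P1: "sets (P ?e) = sets MX" "space (P ?e) \<noteq> {}"
    using P_sets P_prob prob_space.not_empty by auto
  have loss_meas: "(\<lambda>x. \<gamma> \<theta> (\<delta> x)) \<in> borel_measurable MX" if "\<theta> \<in> carrier G" for \<theta>
    using measurable_loss_of_rule[OF \<gamma>_meas \<delta>_meas] that carrier_MG by simp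
  have translate: "\<gamma> g (\<delta> (actX g u)) = \<gamma> ?e (\<delta> u)" if "g \<in> carrier G" "u \<in> space MX" for g u
    using measurable_space[OF \<delta>_meas] that
    by (intro invariant_loss_equivariant_rule[where A = "space MA" and X = "space MX" and actA = actA]
        grp \<gamma>_inv \<delta>_equiv) auto
  have s_carrier: "s (x, u) \<in> carrier G"
    if "x \<in> space MX" "u \<in> space MX" "\<phi> x = \<phi> u" for x u
    using measurable_space[OF s_meas, of "(x, u)"] that carrier_MG
    by (simp add: space_restrict_space space_pair_measure)
  have "(\<integral>\<^sup>+ x. \<gamma> \<theta> (\<delta> x) \<partial>P \<theta>) = (\<integral>\<^sup>+ u. \<gamma> ?e (\<delta> u) \<partial>P ?e)" if "\<theta> \<in> carrier G" for \<theta>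
    using nn_integral_distr_action[OF actX carrier_MG P1(1) that loss_meas[OF that]]
      translate[OF that] P_inv[OF that one_closed] that by simp
  moreover have "(\<integral>\<^sup>+ u. \<gamma> ?e (\<delta> u) \<partial>P ?e) = (\<integral>\<^sup>+ y. (\<integral>\<^sup>+ u. \<gamma> ?e (\<delta> u) \<partial>Qc y) \<partial>distr (P ?e) MY \<phi>)"
    using Qc_rcd \<phi>_meas P1(2) loss_meas[OF one_closed]
    by (intro nn_integral_regular_cond_distr) (simp_all add: measurable_cong_sets[OF P1(1) refl])
  moreover have "AE y in distr (P ?e) MY \<phi>. \<forall>x\<in>space MX. \<phi> x = y \<longrightarrow>
      (\<integral>\<^sup>+ u. \<gamma> ?e (\<delta> u) \<partial>Qc y) = (\<integral>\<^sup>+ u. \<gamma> (s (x, u)) (\<delta> x) \<partial>Qc y)"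
    using Qc_conc
  proof eventually_elim
    case (elim y)
    show ?case
    proof (intro ballI impI)
      fix x assume x: "x \<in> space MX" and "\<phi> x = y"
      then have fibre: "AE u in Qc y. \<phi> u = \<phi> x"
        using elim by simp
      have "sets (Qc y) = sets MX"
        using sets_regular_cond_distr[OF Qc_rcd measurable_space[OF \<phi>_meas x]] P1(1) \<open>\<phi> x = y\<close>
        by simp
      from nn_integral_loss_along_selection[where G = G and \<gamma> = \<gamma> and \<delta> = \<delta> and actX = actX
          and s = s, OF fibre this s_carrier[OF x] s_sel[OF x] translate]
      show "(\<integral>\<^sup>+ u. \<gamma> ?e (\<delta> u) \<partial>Qc y) = (\<integral>\<^sup>+ u. \<gamma> (s (x, u)) (\<delta> x) \<partial>Qc y)" .
    qed
  qed
  ultimately show ?thesis by simp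
qed

end
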